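(* Let $(E,p,X)$ and $(F,q,Y)$ be étalé spaces over Boolean spaces and let $\varphi\colon(E,p,X)\to(F,q,Y)$ be a proper continuous relational covering morphism with underlying map $\overline{\varphi}\colon X\to Y$. Then $\overline{\varphi}$ is a proper continuous map of topological spaces.
   Context: A Boolean space is a Hausdorff space with a basis of compact-open sets. An étalé space $(E,p,X)$: topological spaces $E,X$ with a surjective local homeomorphism $p\colon E\to X$. Stalk: $F_y=q^{-1}(y)$. A relational morphism $\varphi\colon(E,p,X)\to(F,q,Y)$ is a map $\varphi\colon E\to\mathsf P(F)$ together with a map $\overline{\varphi}\colon X\to Y$ such that $\varphi(e)\subseteq F_{\overline{\varphi}(p(e))}$ for all $e\in E$. It is locally injective if $p(e)=p(e')$ and $\varphi(e)\cap\varphi(e')\neq\emptyset$ imply $e=e'$; locally surjective if whenever $y\in F$ with $q(y)=\overline{\varphi}(u)$ for some $u\in X$, there is $e\in E$ with $p(e)=u$ and $y\in\varphi(e)$; a relational covering morphism if both. With $\varphi^{-1}(A)=\{e\in E:\varphi(e)\cap A\neq\emptyset\}$, $\varphi$ is continuous if $\varphi^{-1}(A)$ is open for all open $A\subseteq F$ and proper if $\varphi^{-1}(K)$ is compact for all compact $K\subseteq F$. A continuous map is proper if inverse images of compact sets are compact. *)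

theory Defs
  imports "HOL-Analysis.Analysis"
begin

definition boolean_space :: "'a topology \<Rightarrow> bool" where
  "boolean_space X \<longleftrightarrow> Hausdorff_space X \<and>
     (\<exists>\<B>. (\<forall>B\<in>\<B>. openin X B \<and> compactin X B) \<and>
          (\<forall>U x. openin X U \<and> x \<in> U \<longrightarrow> (\<exists>B\<in>\<B>. x \<in> B \<and> B \<subseteq> U)))"

definition local_homeomorphism :: "'a topology \<Rightarrow> 'b topology \<Rightarrow> ('a \<Rightarrow> 'b) \<Rightarrow> bool" where
  "local_homeomorphism E X p \<longleftrightarrow> continuous_map E X p \<and>
     (\<forall>e\<in>topspace E. \<exists>U. openin E U \<and> e \<in> U \<and> openin X (p ` U) \<and>
          homeomorphic_map (subtopology E U) (subtopology X (p ` U)) p)"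

definition etale_space :: "'a topology \<Rightarrow> ('a \<Rightarrow> 'b) \<Rightarrow> 'b topology \<Rightarrow> bool" where
  "etale_space E p X \<longleftrightarrow> local_homeomorphism E X p \<and> p ` topspace E = topspace X"

definition stalk :: "'a topology \<Rightarrow> ('a \<Rightarrow> 'b) \<Rightarrow> 'b \<Rightarrow> 'a set" where
  "stalk F q y = {f \<in> topspace F. q f = y}"

definition relational_morphism ::
  "'e topology \<Rightarrow> ('e \<Rightarrow> 'x) \<Rightarrow> 'x topology \<Rightarrow>
   'f topology \<Rightarrow> ('f \<Rightarrow> 'y) \<Rightarrow> 'y topology \<Rightarrow>
   ('e \<Rightarrow> 'f set) \<Rightarrow> ('x \<Rightarrow> 'y) \<Rightarrow> bool" where
  "relational_morphism E p X F q Y \<phi> \<phi>b \<longleftrightarrow>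
     \<phi>b ` topspace X \<subseteq> topspace Y \<and>
     (\<forall>e\<in>topspace E. \<phi> e \<subseteq> stalk F q (\<phi>b (p e)))"

definition rel_locally_injective ::
  "'e topology \<Rightarrow> ('e \<Rightarrow> 'x) \<Rightarrow> ('e \<Rightarrow> 'f set) \<Rightarrow> bool" where
  "rel_locally_injective E p \<phi> \<longleftrightarrow>
     (\<forall>e\<in>topspace E. \<forall>e'\<in>topspace E.
        p e = p e' \<and> \<phi> e \<inter> \<phi> e' \<noteq> {} \<longrightarrow> e = e')"

definition rel_locally_surjective ::
  "'e topology \<Rightarrow> ('e \<Rightarrow> 'x) \<Rightarrow> 'x topology \<Rightarrow> 'f topology \<Rightarrow> ('f \<Rightarrow> 'y) \<Rightarrow>
   ('e \<Rightarrow> 'f set) \<Rightarrow> ('x \<Rightarrow> 'y) \<Rightarrow> bool" where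
  "rel_locally_surjective E p X F q \<phi> \<phi>b \<longleftrightarrow>
     (\<forall>y\<in>topspace F. \<forall>u\<in>topspace X. q y = \<phi>b u \<longrightarrow>
        (\<exists>e\<in>topspace E. p e = u \<and> y \<in> \<phi> e))"

definition relational_covering_morphism ::
  "'e topology \<Rightarrow> ('e \<Rightarrow> 'x) \<Rightarrow> 'x topology \<Rightarrow>
   'f topology \<Rightarrow> ('f \<Rightarrow> 'y) \<Rightarrow> 'y topology \<Rightarrow>
   ('e \<Rightarrow> 'f set) \<Rightarrow> ('x \<Rightarrow> 'y) \<Rightarrow> bool" where
  "relational_covering_morphism E p X F q Y \<phi> \<phi>b \<longleftrightarrow>
     relational_morphism E p X F q Y \<phi> \<phi>b \<and>
     rel_locally_injective E p \<phi> \<and> rel_locally_surjective E p X F q \<phi> \<phi>b"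

definition rel_preimage :: "'e topology \<Rightarrow> ('e \<Rightarrow> 'f set) \<Rightarrow> 'f set \<Rightarrow> 'e set" where
  "rel_preimage E \<phi> A = {e \<in> topspace E. \<phi> e \<inter> A \<noteq> {}}"

definition rel_continuous :: "'e topology \<Rightarrow> 'f topology \<Rightarrow> ('e \<Rightarrow> 'f set) \<Rightarrow> bool" where
  "rel_continuous E F \<phi> \<longleftrightarrow> (\<forall>A. openin F A \<longrightarrow> openin E (rel_preimage E \<phi> A))"

definition rel_proper :: "'e topology \<Rightarrow> 'f topology \<Rightarrow> ('e \<Rightarrow> 'f set) \<Rightarrow> bool" where
  "rel_proper E F \<phi> \<longleftrightarrow> (\<forall>K. compactin F K \<longrightarrow> compactin E (rel_preimage E \<phi> K))"

text \<open>Proper map in the paper's sense: preimages of compact sets are compact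
  (not the library's proper_map, which is closed + compact fibres).\<close>
definition compact_preimage_map :: "'a topology \<Rightarrow> 'b topology \<Rightarrow> ('a \<Rightarrow> 'b) \<Rightarrow> bool" where
  "compact_preimage_map X Y f \<longleftrightarrow>
     (\<forall>K. compactin Y K \<longrightarrow> compactin X {x \<in> topspace X. f x \<in> K})"

end

theory Submission
  imports Defs
begin

text \<open>The projection \<open>p\<close> is a local homeomorphism, hence open, and it is
  continuous, hence preserves compactness. The covering conditions give
  \<open>p (\<phi>\<^sup>-\<^sup>1 C) = \<phi>b\<^sup>-\<^sup>1 S\<close> for every \<open>C \<subseteq> q\<^sup>-\<^sup>1 S\<close> with \<open>S \<subseteq> q C\<close>. For open \<open>S\<close> take
  \<open>C = q\<^sup>-\<^sup>1 S\<close>; for compact \<open>S\<close> the compact-open basis of \<open>Y\<close> lets one cover \<open>S\<close> by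
  finitely many compact sets over which \<open>q\<close> has local sections, and the images of
  these sections give a compact \<open>C\<close>.\<close>

lemma local_homeomorphism_open_map:
  assumes "local_homeomorphism E X p"
  shows "open_map E X p"
  unfolding open_map_def
proof (intro allI impI)
  fix W assume W: "openin E W"
  show "openin X (p ` W)"
  proof (subst openin_subopen, intro ballI)
    fix y assume "y \<in> p ` W"
    then obtain e where e: "e \<in> W" "y = p e"
      by blast
    then obtain U where U: "e \<in> U" "openin X (p ` U)"
        "homeomorphic_map (subtopology E U) (subtopology X (p ` U)) p"
      using assms openin_subset[OF W] unfolding local_homeomorphism_def by blast
    have "openin (subtopology E U) (W \<inter> U)"
      using W by (simp add: openin_subtopology_Int)
    then have "openin (subtopology X (p ` U)) (p ` (W \<inter> U))"
      using U(3) homeomorphic_imp_open_map unfolding open_map_def by blast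
    then have "openin X (p ` (W \<inter> U))"
      using U(2) openin_trans_full by blast
    then show "\<exists>T. openin X T \<and> y \<in> T \<and> T \<subseteq> p ` W"
      using e U(1) by blast
  qed
qed

lemma etale_space_continuous_map:
  assumes "etale_space E p X"
  shows "continuous_map E X p"
  using assms unfolding etale_space_def local_homeomorphism_def by blast

lemma homeomorphic_map_lift_compactin:
  assumes hom: "homeomorphic_map (subtopology F U) (subtopology Y (q ` U)) q"
    and "compactin Y K" "K \<subseteq> q ` U"
  shows "\<exists>C. compactin F C \<and> C \<subseteq> U \<and> q ` C = K"
proof (intro exI conjI)
  let ?C = "{f \<in> topspace F \<inter> U. q f \<in> K}"
  show image: "q ` ?C = K"
  proof
    show "K \<subseteq> q ` ?C"
    proof
      fix y assume "y \<in> K"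
      then have "y \<in> topspace (subtopology Y (q ` U))"
        using assms(3) compactin_subset_topspace[OF assms(2)] by auto
      then obtain f where "f \<in> topspace F \<inter> U" "q f = y"
        using homeomorphic_imp_surjective_map[OF hom] by (metis imageE topspace_subtopology)
      then show "y \<in> q ` ?C"
        using \<open>y \<in> K\<close> by blast
    qed
  qed auto
  have "compactin (subtopology Y (q ` U)) (q ` ?C)"
    using assms(2,3) image by (simp add: compactin_subtopology)
  moreover have "?C \<subseteq> topspace (subtopology F U)"
    by auto
  ultimately have "compactin (subtopology F U) ?C"
    using homeomorphic_map_compactness[OF hom] by blast
  then show "compactin F ?C"
    by (simp add: compactin_subtopology)
qed auto

lemma etale_space_compact_open_chart:
  assumes "boolean_space Y" "etale_space F q Y" "y \<in> topspace Y"
  shows "\<exists>B U. openin Y B \<and> compactin Y B \<and> y \<in> B \<and> B \<subseteq> q ` U \<and>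
           homeomorphic_map (subtopology F U) (subtopology Y (q ` U)) q"
proof -
  obtain \<B> where \<B>: "\<And>B. B \<in> \<B> \<Longrightarrow> openin Y B \<and> compactin Y B"
    and \<B>_base: "\<And>V y. openin Y V \<Longrightarrow> y \<in> V \<Longrightarrow> \<exists>B\<in>\<B>. y \<in> B \<and> B \<subseteq> V"
    using assms(1) unfolding boolean_space_def by metis
  obtain f where f: "f \<in> topspace F" "q f = y"
    using assms(2,3) unfolding etale_space_def by (metis imageE)
  then obtain U where U: "f \<in> U" "openin Y (q ` U)"
      "homeomorphic_map (subtopology F U) (subtopology Y (q ` U)) q"
    using assms(2) unfolding etale_space_def local_homeomorphism_def by blast
  then obtain B where "B \<in> \<B>" "y \<in> B" "B \<subseteq> q ` U"
    using \<B>_base f by blast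
  then show ?thesis
    using \<B> U(3) by blast
qed

lemma etale_space_lift_compactin:
  assumes "boolean_space Y" "etale_space F q Y" "compactin Y K"
  shows "\<exists>C. compactin F C \<and> C \<subseteq> {f \<in> topspace F. q f \<in> K} \<and> K \<subseteq> q ` C"
proof -
  have hY: "Hausdorff_space Y"
    using assms(1) boolean_space_def by blast
  define \<U> where "\<U> = {B. openin Y B \<and> compactin Y B \<and> (\<exists>U. B \<subseteq> q ` U \<and>
      homeomorphic_map (subtopology F U) (subtopology Y (q ` U)) q)}"
  have "K \<subseteq> \<Union>\<U>"
  proof
    fix y assume "y \<in> K"
    then have "y \<in> topspace Y"
      using assms(3) compactin_subset_topspace by blast
    then show "y \<in> \<Union>\<U>"
      using etale_space_compact_open_chart[OF assms(1,2)] unfolding \<U>_def by blast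
  qed
  moreover have "\<forall>B\<in>\<U>. openin Y B"
    unfolding \<U>_def by blast
  ultimately obtain \<G> where \<G>: "finite \<G>" "\<G> \<subseteq> \<U>" "K \<subseteq> \<Union>\<G>"
    using assms(3) unfolding compactin_def by meson
  have "\<exists>C. compactin F C \<and> C \<subseteq> {f \<in> topspace F. q f \<in> K} \<and> q ` C = K \<inter> B"
    if "B \<in> \<G>" for B
  proof -
    obtain U where U: "B \<subseteq> q ` U" "homeomorphic_map (subtopology F U) (subtopology Y (q ` U)) q"
      using \<open>B \<in> \<G>\<close> \<G>(2) unfolding \<U>_def by blast
    have "compactin Y B"
      using \<G>(2) that unfolding \<U>_def by blast
    then have "compactin Y (K \<inter> B)"
      by (rule closed_Int_compactin[OF compactin_imp_closedin[OF hY assms(3)]])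
    then obtain C where "compactin F C" "q ` C = K \<inter> B"
      using homeomorphic_map_lift_compactin[OF U(2)] U(1) by blast
    moreover have "C \<subseteq> topspace F"
      using \<open>compactin F C\<close> compactin_subset_topspace by blast
    ultimately show ?thesis
      by blast
  qed
  then obtain Cf where Cf: "\<And>B. B \<in> \<G> \<Longrightarrow> compactin F (Cf B) \<and>
      Cf B \<subseteq> {f \<in> topspace F. q f \<in> K} \<and> q ` Cf B = K \<inter> B"
    by (metis (lifting))
  show ?thesis
  proof (intro exI conjI)
    show "compactin F (\<Union>(Cf ` \<G>))"
      using Cf \<G>(1) by (intro compactin_Union) auto
    show "\<Union>(Cf ` \<G>) \<subseteq> {f \<in> topspace F. q f \<in> K}"
      using Cf by blast
    show "K \<subseteq> q ` \<Union>(Cf ` \<G>)"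
    proof
      fix y assume "y \<in> K"
      then obtain B where "B \<in> \<G>" "y \<in> B"
        using \<G>(3) by blast
      then have "y \<in> q ` Cf B"
        using Cf \<open>y \<in> K\<close> by blast
      then show "y \<in> q ` \<Union>(Cf ` \<G>)"
        using \<open>B \<in> \<G>\<close> by blast
    qed
  qed
qed

lemma image_rel_preimage_eq_base_preimage:
  assumes "relational_morphism E p X F q Y \<phi> \<phi>b" "rel_locally_surjective E p X F q \<phi> \<phi>b"
    and "p ` topspace E \<subseteq> topspace X"
    and "C \<subseteq> {f \<in> topspace F. q f \<in> S}" "S \<subseteq> q ` C"
  shows "p ` rel_preimage E \<phi> C = {x \<in> topspace X. \<phi>b x \<in> S}"
proof
  show "p ` rel_preimage E \<phi> C \<subseteq> {x \<in> topspace X. \<phi>b x \<in> S}"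
  proof
    fix x assume "x \<in> p ` rel_preimage E \<phi> C"
    then obtain e f where e: "e \<in> topspace E" "x = p e" "f \<in> \<phi> e" "f \<in> C"
      unfolding rel_preimage_def by blast
    then have "q f = \<phi>b x"
      using assms(1) unfolding relational_morphism_def stalk_def by blast
    then show "x \<in> {x \<in> topspace X. \<phi>b x \<in> S}"
      using e assms(3,4) by auto
  qed
  show "{x \<in> topspace X. \<phi>b x \<in> S} \<subseteq> p ` rel_preimage E \<phi> C"
  proof
    fix x assume x: "x \<in> {x \<in> topspace X. \<phi>b x \<in> S}"
    then obtain f where f: "f \<in> C" "q f = \<phi>b x"
      using assms(5) by force
    then obtain e where "e \<in> topspace E" "p e = x" "f \<in> \<phi> e"
      using assms(2,4) x unfolding rel_locally_surjective_def by blast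
    then show "x \<in> p ` rel_preimage E \<phi> C"
      using f unfolding rel_preimage_def by blast
  qed
qed

lemma base_continuous_map_of_rel_continuous:
  assumes "etale_space E p X" "etale_space F q Y"
    and "relational_morphism E p X F q Y \<phi> \<phi>b" "rel_locally_surjective E p X F q \<phi> \<phi>b"
    and "rel_continuous E F \<phi>"
  shows "continuous_map X Y \<phi>b"
  unfolding continuous_map_def
proof (intro conjI allI impI)
  show "\<phi>b \<in> topspace X \<rightarrow> topspace Y"
    using assms(3) unfolding relational_morphism_def by blast
  fix V assume V: "openin Y V"
  let ?C = "{f \<in> topspace F. q f \<in> V}"
  have "openin F ?C"
    using openin_continuous_map_preimage[OF etale_space_continuous_map[OF assms(2)] V] .
  then have "openin E (rel_preimage E \<phi> ?C)"
    using assms(5) unfolding rel_continuous_def by blast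
  then have "openin X (p ` rel_preimage E \<phi> ?C)"
    using local_homeomorphism_open_map assms(1)
    unfolding etale_space_def open_map_def by blast
  moreover have "V \<subseteq> q ` ?C"
  proof
    fix y assume "y \<in> V"
    then have "y \<in> q ` topspace F"
      using openin_subset[OF V] assms(2) unfolding etale_space_def by blast
    then show "y \<in> q ` ?C"
      using \<open>y \<in> V\<close> by blast
  qed
  moreover have "p ` topspace E \<subseteq> topspace X"
    using continuous_map_image_subset_topspace[OF etale_space_continuous_map[OF assms(1)]] .
  ultimately show "openin X {x \<in> topspace X. \<phi>b x \<in> V}"
    using image_rel_preimage_eq_base_preimage[OF assms(3,4), of ?C V] by simp
qed

lemma base_compact_preimage_map_of_rel_proper:
  assumes "boolean_space Y" "etale_space E p X" "etale_space F q Y"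
    and "relational_morphism E p X F q Y \<phi> \<phi>b" "rel_locally_surjective E p X F q \<phi> \<phi>b"
    and "rel_proper E F \<phi>"
  shows "compact_preimage_map X Y \<phi>b"
  unfolding compact_preimage_map_def
proof (intro allI impI)
  fix K assume "compactin Y K"
  then obtain C where C: "compactin F C" "C \<subseteq> {f \<in> topspace F. q f \<in> K}" "K \<subseteq> q ` C"
    using etale_space_lift_compactin[OF assms(1,3)] by blast
  have "compactin E (rel_preimage E \<phi> C)"
    using C(1) assms(6) unfolding rel_proper_def by blast
  then have "compactin X (p ` rel_preimage E \<phi> C)"
    by (rule image_compactin[OF _ etale_space_continuous_map[OF assms(2)]])
  moreover have "p ` topspace E \<subseteq> topspace X"
    using continuous_map_image_subset_topspace[OF etale_space_continuous_map[OF assms(2)]] .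
  ultimately show "compactin X {x \<in> topspace X. \<phi>b x \<in> K}"
    using image_rel_preimage_eq_base_preimage[OF assms(4,5) _ C(2,3)] by simp
qed

theorem lemma1p12:
  fixes E :: "'e topology" and X :: "'x topology" and p :: "'e \<Rightarrow> 'x"
    and F :: "'f topology" and Y :: "'y topology" and q :: "'f \<Rightarrow> 'y"
    and \<phi> :: "'e \<Rightarrow> 'f set" and \<phi>b :: "'x \<Rightarrow> 'y"
  assumes "boolean_space X" and "boolean_space Y"
    and "etale_space E p X" and "etale_space F q Y"
    and "relational_covering_morphism E p X F q Y \<phi> \<phi>b"
    and "rel_continuous E F \<phi>" and "rel_proper E F \<phi>"
  shows "continuous_map X Y \<phi>b \<and> compact_preimage_map X Y \<phi>b"
proof -
  have morphism: "relational_morphism E p X F q Y \<phi> \<phi>b"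
    and surjective: "rel_locally_surjective E p X F q \<phi> \<phi>b"
    using assms(5) unfolding relational_covering_morphism_def by auto
  show ?thesis
    using base_continuous_map_of_rel_continuous[OF assms(3,4) morphism surjective assms(6)]
      base_compact_preimage_map_of_rel_proper[OF assms(2,3,4) morphism surjective assms(7)]
    by blast
qed

end
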